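(* Let $G$ be a connected block graph with blocks $B_1, B_2,\ldots, B_t$, and let $k\ge 2$ be an integer. Then $$SW_k(G) = \sum_{i=1}^t N_k'(G \setminus B_i).$$
   Context: All graphs are finite, simple, undirected. A block of a graph is a maximal connected induced subgraph without cut vertices; a block graph is a graph in which every block is a complete graph (clique). For a connected graph $G$ and $S\subseteq V(G)$, the Steiner distance $d(S)$ is the minimum number of edges of a connected subgraph of $G$ whose vertex set contains $S$. The Steiner $k$-Wiener index is $SW_k(G)=\sum_{S\subseteq V(G),\,|S|=k} d(S)$. For a block $B_i$, $G\setminus B_i$ denotes the graph obtained from $G$ by deleting all edges of $B_i$ (keeping all vertices). For a graph $H$ with connected components $H_1,\dots,H_p$ (with $n(H_j)=|V(H_j)|$), and a tuple $(l_1,\dots,l_p)$ of nonnegative integers, let $\alpha(l_1,\dots,l_p)$ be the number of nonzero $l_j$ minus $1$. Define $$N_k'(H)=\sum_{\substack{l_1+\cdots+l_p=k\\ 0\le l_1,\dots,l_p<k}} \binom{n(H_1)}{l_1}\cdots\binom{n(H_p)}{l_p}\,\alpha(l_1,\dots,l_p)$$ if $p>1$, and $N_k'(H)=0$ if $H$ is connected. Conventions: $\binom{m}{0}=1$ and $\binom{m}{l}=0$ whenever $m<l$. *)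

theory Defs
  imports Main "HOL-Library.FuncSet"
begin

definition simple_graph :: "'a set \<Rightarrow> 'a set set \<Rightarrow> bool" where
  "simple_graph V E \<longleftrightarrow> finite V \<and> (\<forall>e\<in>E. \<exists>u v. u \<noteq> v \<and> u \<in> V \<and> v \<in> V \<and> e = {u, v})"

definition reach :: "'a set set \<Rightarrow> 'a \<Rightarrow> 'a \<Rightarrow> bool" where
  "reach F = (\<lambda>x y. {x, y} \<in> F)\<^sup>*\<^sup>*"

definition connected_graph :: "'a set \<Rightarrow> 'a set set \<Rightarrow> bool" where
  "connected_graph W F \<longleftrightarrow> W \<noteq> {} \<and> (\<forall>x\<in>W. \<forall>y\<in>W. reach F x y)"

definition induced_edges :: "'a set set \<Rightarrow> 'a set \<Rightarrow> 'a set set" where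
  "induced_edges E B = {e\<in>E. e \<subseteq> B}"

text \<open>(W, F) has no cut vertex: deleting any vertex v does not disconnect any two
  vertices that were connected (here W is connected, so: all remaining vertices stay connected).\<close>
definition no_cut_vertex :: "'a set \<Rightarrow> 'a set set \<Rightarrow> bool" where
  "no_cut_vertex W F \<longleftrightarrow>
     (\<forall>v\<in>W. \<forall>x\<in>W - {v}. \<forall>y\<in>W - {v}. reach F x y \<longrightarrow> reach {e\<in>F. v \<notin> e} x y)"

definition is_block :: "'a set \<Rightarrow> 'a set set \<Rightarrow> 'a set \<Rightarrow> bool" where
  "is_block V E B \<longleftrightarrow> B \<subseteq> V \<and> connected_graph B (induced_edges E B) \<and>
     no_cut_vertex B (induced_edges E B) \<and>
     (\<forall>B'. B \<subset> B' \<and> B' \<subseteq> V \<longrightarrow>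
        \<not> (connected_graph B' (induced_edges E B') \<and> no_cut_vertex B' (induced_edges E B')))"

definition blocks :: "'a set \<Rightarrow> 'a set set \<Rightarrow> 'a set set" where
  "blocks V E = {B. is_block V E B}"

definition block_graph :: "'a set \<Rightarrow> 'a set set \<Rightarrow> bool" where
  "block_graph V E \<longleftrightarrow> (\<forall>B\<in>blocks V E. \<forall>u\<in>B. \<forall>v\<in>B. u \<noteq> v \<longrightarrow> {u, v} \<in> E)"

definition steiner_dist :: "'a set \<Rightarrow> 'a set set \<Rightarrow> 'a set \<Rightarrow> nat" where
  "steiner_dist V E S = (LEAST m. \<exists>W F. S \<subseteq> W \<and> W \<subseteq> V \<and> F \<subseteq> E \<and> (\<forall>e\<in>F. e \<subseteq> W) \<and>
       connected_graph W F \<and> card F = m)"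

definition steiner_wiener :: "nat \<Rightarrow> 'a set \<Rightarrow> 'a set set \<Rightarrow> nat" where
  "steiner_wiener k V E = (\<Sum>S\<in>{S. S \<subseteq> V \<and> card S = k}. steiner_dist V E S)"

definition components :: "'a set \<Rightarrow> 'a set set \<Rightarrow> 'a set set" where
  "components V F = {{y\<in>V. reach F x y} | x. x \<in> V}"

text \<open>G \ B: delete the edges of block B, keep all vertices.\<close>
definition delete_block_edges :: "'a set set \<Rightarrow> 'a set \<Rightarrow> 'a set set" where
  "delete_block_edges E B = E - induced_edges E B"

text \<open>N'_k(H) for H = (V, F); tuples (l_1,...,l_p) are functions from the set of
  components to nat.\<close>
definition N'_k :: "nat \<Rightarrow> 'a set \<Rightarrow> 'a set set \<Rightarrow> int" where
  "N'_k k V F = (let C = components V F in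
     if card C \<le> 1 then 0 else
     (\<Sum>l\<in>{l. l \<in> C \<rightarrow>\<^sub>E {0..k} \<and> sum l C = k \<and> (\<forall>c\<in>C. l c < k)}.
        int (\<Prod>c\<in>C. card c choose l c) * (int (card {c\<in>C. l c \<noteq> 0}) - 1)))"

end

theory Submission
  imports Defs "HOL-Library.Disjoint_Sets"
begin

text \<open>For a block \<open>B\<close> and a vertex set \<open>S\<close> let \<open>c\<^sub>B(S)\<close> be the number of components
  of \<open>G \ B\<close> meeting \<open>S\<close>. The Steiner distance of \<open>S\<close> is \<open>\<Sum>\<^sub>B (c\<^sub>B(S) - 1)\<close>.
  Lower bound: contracting the components of \<open>G \ B\<close> turns a connected subgraph containing
  \<open>S\<close> into a connected graph on at least \<open>c\<^sub>B(S)\<close> vertices whose edges are edges of \<open>B\<close>,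
  and every edge lies in exactly one block. Upper bound: a Steiner tree is grown one vertex \<open>v\<close>
  at a time along a shortest path to the current tree, whose length is at most the number of
  blocks \<open>B\<close> for which the \<open>G \ B\<close>-component of \<open>v\<close> misses the tree: the block of the first
  edge is such a block, but no longer is one for the next vertex, because two vertices of a
  block are never connected in \<open>G \ B\<close>. Finally, grouping the \<open>k\<close>-subsets \<open>S\<close> by the number
  of vertices they take from each component of \<open>G \ B\<close> turns \<open>\<Sum>\<^sub>S (c\<^sub>B(S) - 1)\<close> into
  \<open>N'\<^sub>k(G \ B)\<close>.\<close>

section \<open>Reachability and connected components\<close>

lemma reach_refl [simp]: "reach F x x"
  by (simp add: reach_def)

lemma reach_edge: "{x, y} \<in> F \<Longrightarrow> reach F x y"
  by (simp add: reach_def r_into_rtranclp)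

lemma reach_trans: "reach F x y \<Longrightarrow> reach F y z \<Longrightarrow> reach F x z"
  unfolding reach_def by (rule rtranclp_trans)

lemma reach_induct [consumes 1, case_names base step]:
  assumes "reach F x y" "P x" "\<And>y z. reach F x y \<Longrightarrow> {y, z} \<in> F \<Longrightarrow> P y \<Longrightarrow> P z"
  shows "P y"
  using assms(1) unfolding reach_def
  by (induction rule: rtranclp_induct) (auto intro: assms(2,3) simp: reach_def)

lemma reach_sym: "reach F x y \<Longrightarrow> reach F y x"
proof (induction rule: reach_induct)
  case (step y z)
  then show ?case by (metis insert_commute reach_edge reach_trans)
qed simp

lemma reach_mono: "reach F x y \<Longrightarrow> F \<subseteq> F' \<Longrightarrow> reach F' x y"
  by (induction rule: reach_induct) (auto intro: reach_trans reach_edge)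

lemma reach_crossing_edge:
  "reach F x y \<Longrightarrow> P x \<Longrightarrow> \<not> P y \<Longrightarrow> \<exists>p q. {p, q} \<in> F \<and> P p \<and> \<not> P q"
  by (induction rule: reach_induct) auto

lemma reach_insert_edge:
  assumes "reach (insert {a, b} D) x y" "\<not> reach D x a" "\<not> reach D y a"
  shows "reach D x y"
proof -
  have "reach D x y \<or> reach D x b" if r: "reach (insert {a, b} D) x y" and "\<not> reach D x a" for x y
  proof (rule ccontr)
    assume neg: "\<not> (reach D x y \<or> reach D x b)"
    then obtain p q where "{p, q} \<in> insert {a, b} D" "reach D x p" "\<not> reach D x q"
      using reach_crossing_edge[OF r, of "reach D x"] by auto
    then show False
      using neg \<open>\<not> reach D x a\<close> by (auto simp: doubleton_eq_iff intro: reach_trans reach_edge)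
  qed
  from this[OF assms(1,2)] this[OF reach_sym[OF assms(1)] assms(3)] show ?thesis
    using reach_trans[of D x b y] reach_sym[of D y b] reach_sym[of D y x] by blast
qed

lemma reach_map:
  assumes "reach F x y" "\<And>p q. {p, q} \<in> F \<Longrightarrow> f p = f q \<or> {f p, f q} \<in> D"
  shows "reach D (f x) (f y)"
  using assms(1)
proof (induction rule: reach_induct)
  case (step y z)
  then show ?case using assms(2)[OF step(2)] by (auto intro: reach_trans reach_edge)
qed simp

lemma reach_empty: "reach {} x y \<longleftrightarrow> x = y"
proof
  show "reach {} x y \<Longrightarrow> x = y" by (induction rule: reach_induct) auto
qed simp

lemma reach_via_hub: "(\<And>z. z \<in> X \<Longrightarrow> reach F z h) \<Longrightarrow> x \<in> X \<Longrightarrow> y \<in> X \<Longrightarrow> reach F x y"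
  by (metis reach_sym reach_trans)

lemma connected_graph_hub: "h \<in> W \<Longrightarrow> (\<And>z. z \<in> W \<Longrightarrow> reach F z h) \<Longrightarrow> connected_graph W F"
  unfolding connected_graph_def by (metis empty_iff reach_sym reach_trans)

definition component_of :: "'a set \<Rightarrow> 'a set set \<Rightarrow> 'a \<Rightarrow> 'a set" where
  "component_of W D x = {y\<in>W. reach D x y}"

lemma components_eq_image: "components W D = component_of W D ` W"
  by (auto simp: components_def component_of_def)

lemma component_of_eq_iff:
  assumes "x \<in> W" "y \<in> W"
  shows "component_of W D x = component_of W D y \<longleftrightarrow> reach D x y"
  using assms unfolding component_of_def
  by (smt (verit, best) mem_Collect_eq reach_refl reach_sym reach_trans set_eq_iff)

lemma components_connected: "connected_graph W D \<Longrightarrow> components W D = {W}"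
  unfolding connected_graph_def components_def by auto

lemma partition_on_components: "partition_on W (components W D)"
proof (rule partition_onI)
  show "\<Union>(components W D) = W"
    unfolding components_def by (blast intro: reach_refl)
  show "{} \<notin> components W D"
    unfolding components_def by (blast intro: reach_refl)
next
  fix p q assume pq: "p \<in> components W D" "q \<in> components W D" "p \<noteq> q"
  then obtain x y where xy: "x \<in> W" "y \<in> W" "p = component_of W D x" "q = component_of W D y"
    unfolding components_eq_image by blast
  have "z \<notin> q" if "z \<in> p" for z
  proof
    assume "z \<in> q"
    then have xz: "reach D x z" and yz: "reach D y z"
      using that xy(3,4) unfolding component_of_def by blast+
    have "reach D x y" using reach_trans[OF xz reach_sym[OF yz]] .
    then show False using xy pq(3) component_of_eq_iff[of x W y D] by simp
  qed
  then show "disjnt p q" by (auto simp: disjnt_def)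
qed

lemma card_components_insert_edge:
  assumes "finite W" "a \<in> W"
  shows "card (components W D) \<le> card (components W (insert {a, b} D)) + 1"
proof -
  let ?D' = "insert {a, b} D"
  define Wa where "Wa = {x\<in>W. \<not> reach D x a}"
  have "components W D \<subseteq> insert (component_of W D a) (component_of W D ` Wa)"
  proof
    fix c assume "c \<in> components W D"
    then obtain x where "x \<in> W" "c = component_of W D x" by (auto simp: components_eq_image)
    then show "c \<in> insert (component_of W D a) (component_of W D ` Wa)"
      using assms(2) component_of_eq_iff[of x W a D] by (cases "reach D x a") (auto simp: Wa_def)
  qed
  then have "card (components W D) \<le> card (insert (component_of W D a) (component_of W D ` Wa))"
    using assms(1) by (intro card_mono) (auto simp: Wa_def)
  also have "\<dots> \<le> card (component_of W D ` Wa) + 1"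
    by (simp add: card_insert_le_m1 card_insert_if)
  finally have "card (components W D) \<le> card (component_of W D ` Wa) + 1" .
  moreover have "card (component_of W D ` Wa) \<le> card (component_of W ?D' ` Wa)"
  proof (rule card_le_if_inj_on_rel[where r = "(\<subseteq>)"])
    show "finite (component_of W ?D' ` Wa)" using assms(1) by (simp add: Wa_def)
  next
    fix c assume "c \<in> component_of W D ` Wa"
    then show "\<exists>c'. c' \<in> component_of W ?D' ` Wa \<and> c \<subseteq> c'"
      by (auto simp: component_of_def intro: reach_mono)
  next
    fix c1 c2 c' assume "c1 \<in> component_of W D ` Wa" "c2 \<in> component_of W D ` Wa"
      "c' \<in> component_of W ?D' ` Wa" "c1 \<subseteq> c'" "c2 \<subseteq> c'"
    then obtain x1 x2 z where x: "x1 \<in> Wa" "x2 \<in> Wa" "z \<in> Wa" and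
      c: "c1 = component_of W D x1" "c2 = component_of W D x2" "c' = component_of W ?D' z"
      by blast
    then have "reach ?D' z x1" "reach ?D' z x2"
      using \<open>c1 \<subseteq> c'\<close> \<open>c2 \<subseteq> c'\<close> by (auto simp: component_of_def Wa_def)
    then have "reach ?D' x1 x2" by (blast intro: reach_trans reach_sym)
    moreover have "\<not> reach D x1 a" "\<not> reach D x2 a" using x by (simp_all add: Wa_def)
    ultimately have "reach D x1 x2" by (rule reach_insert_edge)
    then show "c1 = c2" using x c by (simp add: component_of_eq_iff Wa_def)
  qed
  moreover have "card (component_of W ?D' ` Wa) \<le> card (components W ?D')"
    using assms(1) by (intro card_mono) (auto simp: components_eq_image Wa_def)
  ultimately show ?thesis by linarith
qed

lemma card_le_card_edges_components:
  assumes "finite W" "finite D" "\<forall>e\<in>D. \<exists>a b. a \<in> W \<and> b \<in> W \<and> e = {a, b}"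
  shows "card W \<le> card D + card (components W D)"
  using assms(2,3)
proof (induction D rule: finite_induct)
  case empty
  have "components W {} = (\<lambda>x. {x}) ` W" by (auto simp: components_def reach_empty)
  then show ?case by (simp add: card_image)
next
  case (insert e D)
  then obtain a b where "a \<in> W" "e = {a, b}" by blast
  then show ?case
    using insert card_components_insert_edge[OF assms(1), of a D b] by auto
qed

section \<open>Walks\<close>

definition walk :: "'a set set \<Rightarrow> 'a list \<Rightarrow> bool" where
  "walk D xs \<longleftrightarrow> xs \<noteq> [] \<and> successively (\<lambda>x y. {x, y} \<in> D) xs"

definition walk_edges :: "'a list \<Rightarrow> 'a set set" where
  "walk_edges xs = (\<lambda>(x, y). {x, y}) ` set (zip xs (tl xs))"

lemma walk_singleton [simp]: "walk D [x]"
  by (simp add: walk_def)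

lemma walk_nonempty: "walk D xs \<Longrightarrow> xs \<noteq> []"
  by (simp add: walk_def)

lemma walk_Cons: "walk D (x # xs) \<longleftrightarrow> xs = [] \<or> {x, hd xs} \<in> D \<and> walk D xs"
  by (cases xs) (auto simp: walk_def)

lemma walk_append:
  "walk D (xs @ ys) \<longleftrightarrow>
     (xs = [] \<longrightarrow> walk D ys) \<and> (ys = [] \<longrightarrow> walk D xs) \<and>
     (xs \<noteq> [] \<longrightarrow> ys \<noteq> [] \<longrightarrow> walk D xs \<and> walk D ys \<and> {last xs, hd ys} \<in> D)"
  by (auto simp: walk_def successively_append_iff)

lemma walk_mono:
  assumes "walk D xs" "\<And>x y. x \<in> set xs \<Longrightarrow> y \<in> set xs \<Longrightarrow> {x, y} \<in> D \<Longrightarrow> {x, y} \<in> D'"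
  shows "walk D' xs"
  using assms by (auto simp: walk_def elim: successively_mono)

lemma walk_reach_hd: "walk D xs \<Longrightarrow> x \<in> set xs \<Longrightarrow> reach D (hd xs) x"
proof (induction xs)
  case (Cons a xs)
  then show ?case
    by (cases "x = a") (auto simp: walk_Cons intro: reach_trans reach_edge)
qed simp

lemma walk_reach: "walk D xs \<Longrightarrow> x \<in> set xs \<Longrightarrow> y \<in> set xs \<Longrightarrow> reach D x y"
  by (metis reach_sym reach_trans walk_reach_hd)

lemma walk_walk_edges: "xs \<noteq> [] \<Longrightarrow> walk (walk_edges xs) xs"
proof (induction xs)
  case (Cons x xs)
  then show ?case
    by (cases xs) (auto simp: walk_Cons walk_edges_def intro: walk_mono)
qed simp

lemma walk_edges_subset: "walk D xs \<Longrightarrow> walk_edges xs \<subseteq> D"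
proof (induction xs)
  case (Cons x xs)
  then show ?case by (cases xs) (auto simp: walk_Cons walk_edges_def)
qed (simp add: walk_edges_def)

lemma walk_edges_subset_set: "e \<in> walk_edges xs \<Longrightarrow> e \<subseteq> set xs"
  by (cases xs) (auto simp: walk_edges_def dest: set_zip_leftD set_zip_rightD)

lemma card_walk_edges: "card (walk_edges xs) \<le> length xs - 1"
proof -
  have "card (walk_edges xs) \<le> card (set (zip xs (tl xs)))"
    unfolding walk_edges_def by (rule card_image_le) simp
  also have "\<dots> \<le> length xs - 1" using card_length[of "zip xs (tl xs)"] by simp
  finally show ?thesis .
qed

lemma walk_shortcut:
  assumes "walk D (xs @ [y] @ ys @ [y] @ zs)"
  shows "walk D (xs @ y # zs)"
  using assms by (auto simp: walk_append walk_Cons)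

lemma reach_distinct_walk:
  assumes "reach D x y"
  obtains xs where "walk D xs" "distinct xs" "hd xs = x" "last xs = y"
proof -
  define P where "P xs \<longleftrightarrow> walk D xs \<and> hd xs = x \<and> last xs = y" for xs
  have "\<exists>xs. P xs"
    using assms unfolding P_def
  proof (induction rule: reach_induct)
    case base
    show ?case by (intro exI[of _ "[x]"]) simp
  next
    case (step y z)
    then obtain xs where "walk D xs" "hd xs = x" "last xs = y" by blast
    moreover have "xs \<noteq> []" using \<open>walk D xs\<close> by (rule walk_nonempty)
    ultimately show ?case
      using step(2) by (intro exI[of _ "xs @ [z]"]) (auto simp: walk_append)
  qed
  then obtain xs where xs: "P xs" and shortest: "\<And>ys. P ys \<Longrightarrow> length xs \<le> length ys"
    using ex_has_least_nat[of P _ length] by metis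
  have "distinct xs"
  proof (rule ccontr)
    assume "\<not> distinct xs"
    then obtain as y bs cs where split: "xs = as @ [y] @ bs @ [y] @ cs"
      using not_distinct_decomp by blast
    then have "P (as @ y # cs)"
      using xs walk_shortcut[of D as y bs cs] by (auto simp: P_def hd_append)
    then show False using shortest[of "as @ y # cs"] split by simp
  qed
  then show ?thesis using that xs by (auto simp: P_def)
qed

section \<open>Nonseparable sets and blocks\<close>

lemma simple_graph_edgeD: "simple_graph V E \<Longrightarrow> {x, y} \<in> E \<Longrightarrow> x \<in> V \<and> y \<in> V \<and> x \<noteq> y"
  unfolding simple_graph_def by (metis doubleton_eq_iff)

lemma simple_graph_edgeE:
  assumes "simple_graph V E" "e \<in> E"
  obtains u v where "e = {u, v}" "u \<noteq> v" "u \<in> V" "v \<in> V"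
  using assms unfolding simple_graph_def by blast

lemma walk_subset_vertices:
  assumes "simple_graph V E" "walk E xs" "hd xs \<in> V"
  shows "set xs \<subseteq> V"
  using assms(2,3)
proof (induction xs)
  case (Cons x xs)
  then show ?case
    using simple_graph_edgeD[OF assms(1)] by (cases xs) (auto simp: walk_Cons)
qed simp

definition nonseparable :: "'a set set \<Rightarrow> 'a set \<Rightarrow> bool" where
  "nonseparable E B \<longleftrightarrow>
     connected_graph B (induced_edges E B) \<and> no_cut_vertex B (induced_edges E B)"

lemma is_block_iff:
  "is_block V E B \<longleftrightarrow>
     B \<subseteq> V \<and> nonseparable E B \<and> (\<forall>B'. B \<subset> B' \<and> B' \<subseteq> V \<longrightarrow> \<not> nonseparable E B')"
  by (simp add: is_block_def nonseparable_def)

lemma is_block_maximal: "is_block V E B \<Longrightarrow> B \<subset> B' \<Longrightarrow> B' \<subseteq> V \<Longrightarrow> \<not> nonseparable E B'"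
  by (simp add: is_block_iff)

lemma induced_edges_mono: "B \<subseteq> B' \<Longrightarrow> induced_edges E B \<subseteq> induced_edges E B'"
  by (auto simp: induced_edges_def)

lemma nonseparable_reach:
  assumes "nonseparable E B" "induced_edges E B \<subseteq> F" "x \<in> B" "y \<in> B"
  shows "reach F x y"
  using assms by (auto simp: nonseparable_def connected_graph_def intro: reach_mono)

lemma nonseparable_reach_avoiding:
  assumes "nonseparable E B" "induced_edges E B \<subseteq> F" "x \<in> B" "y \<in> B" "x \<noteq> v" "y \<noteq> v"
  shows "reach {e\<in>F. v \<notin> e} x y"
proof -
  have "reach {e\<in>induced_edges E B. v \<notin> e} x y"
  proof (cases "v \<in> B")
    case True
    then show ?thesis
      using assms(1,3-6) by (auto simp: nonseparable_def connected_graph_def no_cut_vertex_def)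
  next
    case False
    then have "{e\<in>induced_edges E B. v \<notin> e} = induced_edges E B"
      by (auto simp: induced_edges_def)
    then show ?thesis using assms(1,3,4) by (simp add: nonseparable_def connected_graph_def)
  qed
  then show ?thesis by (rule reach_mono) (use assms(2) in blast)
qed

lemma nonseparable_edge:
  assumes "u \<noteq> v" "{u, v} \<in> E"
  shows "nonseparable E {u, v}"
proof -
  have "reach (induced_edges E {u, v}) z u" if "z \<in> {u, v}" for z
    using that assms(2) reach_edge[of v u] by (auto simp: induced_edges_def insert_commute)
  then have "connected_graph {u, v} (induced_edges E {u, v})"
    by (intro connected_graph_hub) auto
  moreover have "no_cut_vertex {u, v} (induced_edges E {u, v})"
    unfolding no_cut_vertex_def by force
  ultimately show ?thesis by (simp add: nonseparable_def)
qed

lemma nonseparable_Un: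
  assumes ns: "nonseparable E B1" "nonseparable E B2"
    and u: "u \<in> B1 \<inter> B2" "u' \<in> B1 \<inter> B2" "u \<noteq> u'"
  shows "nonseparable E (B1 \<union> B2)"
proof -
  let ?F = "induced_edges E (B1 \<union> B2)"
  have sub: "induced_edges E B1 \<subseteq> ?F" "induced_edges E B2 \<subseteq> ?F"
    by (simp_all add: induced_edges_mono)
  have hub: "reach ?F z u" if "z \<in> B1 \<union> B2" for z
    using that u nonseparable_reach[OF ns(1) sub(1)] nonseparable_reach[OF ns(2) sub(2)] by blast
  have "connected_graph (B1 \<union> B2) ?F"
    using u(1) hub by (blast intro: connected_graph_hub)
  moreover have "no_cut_vertex (B1 \<union> B2) ?F"
    unfolding no_cut_vertex_def
  proof (intro ballI impI)
    fix v x y assume xy: "x \<in> B1 \<union> B2 - {v}" "y \<in> B1 \<union> B2 - {v}"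
    obtain w where w: "w \<in> B1 \<inter> B2" "w \<noteq> v" using u by blast
    have "reach {e\<in>?F. v \<notin> e} z w" if "z \<in> B1 \<union> B2 - {v}" for z
      using that w nonseparable_reach_avoiding[OF ns(1) sub(1)]
        nonseparable_reach_avoiding[OF ns(2) sub(2)] by blast
    then show "reach {e\<in>?F. v \<notin> e} x y" using xy by (rule reach_via_hub)
  qed
  ultimately show ?thesis by (simp add: nonseparable_def)
qed

text \<open>The part of the path on the side of \<open>z\<close> away from \<open>v\<close> avoids \<open>v\<close>.\<close>
lemma distinct_walk_reach_end_avoiding:
  assumes xs: "walk F xs" "distinct xs" and z: "z \<in> set xs" "z \<noteq> v"
  obtains b where "b \<in> {hd xs, last xs}" "b \<noteq> v" "reach {e\<in>F. v \<notin> e} z b"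
proof -
  let ?Fv = "{e\<in>F. v \<notin> e}"
  have avoid: "walk ?Fv ys" if "walk F ys" "v \<notin> set ys" for ys
    by (rule walk_mono[OF that(1)]) (use that(2) in blast)
  show ?thesis
  proof (cases "v \<in> set xs")
    case False
    have "reach ?Fv z (hd xs)" using reach_sym[OF walk_reach_hd[OF avoid[OF xs(1) False] z(1)]] .
    moreover have "hd xs \<noteq> v" using False hd_in_set[OF walk_nonempty[OF xs(1)]] by auto
    ultimately show ?thesis using that by blast
  next
    case True
    then obtain ys zs where split: "xs = ys @ v # zs" by (meson split_list)
    then have v: "v \<notin> set ys" "v \<notin> set zs" using xs(2) by auto
    consider "z \<in> set ys" | "z \<in> set zs" using z split by auto
    then show ?thesis
    proof cases
      case 1
      then have "ys \<noteq> []" by auto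
      then have "walk F ys" "hd ys = hd xs" "hd ys \<noteq> v"
        using xs(1) v(1) unfolding split by (auto simp: walk_append)
      moreover have "reach ?Fv z (hd ys)"
        using reach_sym[OF walk_reach_hd[OF avoid[OF \<open>walk F ys\<close> v(1)] 1]] .
      ultimately show ?thesis using that by auto
    next
      case 2
      then have "zs \<noteq> []" by auto
      then have "walk F zs" "last zs = last xs" "last zs \<noteq> v"
        using xs(1) v(2) unfolding split by (auto simp: walk_append walk_Cons)
      moreover have "reach ?Fv z (last zs)"
        using walk_reach[OF avoid[OF \<open>walk F zs\<close> v(2)] 2 last_in_set[OF \<open>zs \<noteq> []\<close>]] .
      ultimately show ?thesis using that by auto
    qed
  qed
qed

lemma nonseparable_Un_path:
  assumes ns: "nonseparable E B" and xs: "walk E xs" "distinct xs"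
    and ends: "hd xs \<in> B" "last xs \<in> B" "hd xs \<noteq> last xs"
  shows "nonseparable E (B \<union> set xs)"
proof -
  let ?X = "B \<union> set xs" let ?F = "induced_edges E ?X"
  have subB: "induced_edges E B \<subseteq> ?F" by (simp add: induced_edges_mono)
  have xsF: "walk ?F xs" using xs(1) by (rule walk_mono) (auto simp: induced_edges_def)
  have hub: "reach ?F z (hd xs)" if "z \<in> ?X" for z
  proof (cases "z \<in> B")
    case True
    then show ?thesis using ends(1) by (rule nonseparable_reach[OF ns subB])
  next
    case False
    then have "z \<in> set xs" using that by simp
    then show ?thesis by (rule reach_sym[OF walk_reach_hd[OF xsF]])
  qed
  have "connected_graph ?X ?F"
    using ends(1) hub by (blast intro: connected_graph_hub)
  moreover have "no_cut_vertex ?X ?F"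
    unfolding no_cut_vertex_def
  proof (intro ballI impI)
    fix v x y assume xy: "x \<in> ?X - {v}" "y \<in> ?X - {v}"
    let ?Fv = "{e\<in>?F. v \<notin> e}"
    obtain w where w: "w \<in> B" "w \<noteq> v" using ends by blast
    have "reach ?Fv z w" if z: "z \<in> ?X - {v}" for z
    proof -
      obtain b where "b \<in> B - {v}" "reach ?Fv z b"
      proof (cases "z \<in> B")
        case False
        then obtain b where "b \<in> {hd xs, last xs}" "b \<noteq> v" "reach ?Fv z b"
          using distinct_walk_reach_end_avoiding[OF xsF xs(2)] z by auto
        then show ?thesis using that ends by blast
      qed (use z that in auto)
      moreover have "reach ?Fv b w"
        using \<open>b \<in> B - {v}\<close> w by (intro nonseparable_reach_avoiding[OF ns subB]) auto
      ultimately show ?thesis by (blast intro: reach_trans)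
    qed
    then show "reach ?Fv x y" using xy by (rule reach_via_hub)
  qed
  ultimately show ?thesis by (simp add: nonseparable_def)
qed

lemma edge_in_block:
  assumes "finite V" "u \<in> V" "v \<in> V" "u \<noteq> v" "{u, v} \<in> E"
  obtains B where "is_block V E B" "u \<in> B" "v \<in> B"
proof -
  let ?P = "{B. {u, v} \<subseteq> B \<and> B \<subseteq> V \<and> nonseparable E B}"
  have "?P \<subseteq> Pow V" by blast
  then have fin: "finite ?P" using assms(1) by (rule finite_subset[OF _ finite_Pow_iff[THEN iffD2]])
  have mem: "{u, v} \<in> ?P" using assms(2,3) nonseparable_edge[OF assms(4,5)] by simp
  from finite_has_maximal2[OF fin mem]
  obtain B where B: "B \<in> ?P" "\<forall>B'\<in>?P. B \<subseteq> B' \<longrightarrow> B = B'"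
    by blast
  have "\<not> nonseparable E B'" if "B \<subset> B'" "B' \<subseteq> V" for B'
  proof
    assume "nonseparable E B'"
    then have "B' \<in> ?P" using B(1) that by auto
    then show False using B(2) that by blast
  qed
  then have "is_block V E B" using B(1) by (simp add: is_block_iff)
  then show ?thesis using that B(1) by simp
qed

lemma block_unique:
  assumes "is_block V E B1" "is_block V E B2" "u \<in> B1 \<inter> B2" "v \<in> B1 \<inter> B2" "u \<noteq> v"
  shows "B1 = B2"
proof -
  have "nonseparable E (B1 \<union> B2)"
    using assms by (intro nonseparable_Un[of E B1 B2 u v]) (auto simp: is_block_iff)
  moreover have "B1 \<union> B2 \<subseteq> V" using assms(1,2) by (simp add: is_block_iff)
  ultimately have "\<not> B1 \<subset> B1 \<union> B2" "\<not> B2 \<subset> B1 \<union> B2"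
    using is_block_maximal[OF assms(1)] is_block_maximal[OF assms(2)] by blast+
  then show ?thesis by blast
qed

text \<open>A shortest such path could be attached to the block, contradicting its maximality.\<close>
lemma block_vertices_separated:
  assumes sg: "simple_graph V E" and B: "is_block V E B" and ab: "a \<in> B" "b \<in> B" "a \<noteq> b"
  shows "\<not> reach (delete_block_edges E B) a b"
proof
  let ?D = "delete_block_edges E B"
  have BV: "B \<subseteq> V" and nsB: "nonseparable E B" using B by (simp_all add: is_block_iff)
  assume "reach ?D a b"
  then obtain xs where xs: "walk ?D xs" "distinct xs" "hd xs = a" "last xs = b"
    by (rule reach_distinct_walk)
  have xsE: "walk E xs" using xs(1) by (rule walk_mono) (simp add: delete_block_edges_def)
  obtain x1 xs' where xs_eq: "xs = a # x1 # xs'"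
    using xs(3,4) ab(3) walk_nonempty[OF xs(1)] by (cases xs rule: remdups_adj.cases) auto
  have "{a, x1} \<in> E" "{a, x1} \<notin> induced_edges E B"
    using xs(1) by (auto simp: xs_eq walk_Cons delete_block_edges_def)
  then have "x1 \<notin> B" using ab(1) by (simp add: induced_edges_def)
  then have "B \<subset> B \<union> set xs" by (auto simp: xs_eq)
  moreover have "B \<union> set xs \<subseteq> V"
    using walk_subset_vertices[OF sg xsE] xs(3) ab(1) BV by blast
  moreover have "nonseparable E (B \<union> set xs)"
    using nsB xsE xs(2) by (rule nonseparable_Un_path) (use xs(3,4) ab in auto)
  ultimately show False using is_block_maximal[OF B] by blast
qed

section \<open>Connected subgraphs and shortest walks\<close>

definition connected_subgraph :: "'a set \<Rightarrow> 'a set set \<Rightarrow> 'a set \<Rightarrow> 'a set set \<Rightarrow> bool" where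
  "connected_subgraph V E W F \<longleftrightarrow> W \<subseteq> V \<and> F \<subseteq> E \<and> (\<forall>e\<in>F. e \<subseteq> W) \<and> connected_graph W F"

lemma steiner_dist_def':
  "steiner_dist V E S = (LEAST m. \<exists>W F. S \<subseteq> W \<and> connected_subgraph V E W F \<and> card F = m)"
  by (simp add: steiner_dist_def connected_subgraph_def conj_assoc)

lemma connected_subgraph_Un_walk:
  assumes sg: "simple_graph V E" and WF: "connected_subgraph V E W F"
    and xs: "walk E xs" "hd xs \<in> V" "last xs \<in> W"
  shows "connected_subgraph V E (W \<union> set xs) (F \<union> walk_edges xs)"
proof -
  let ?F' = "F \<union> walk_edges xs"
  have ne: "xs \<noteq> []" using xs(1) by (rule walk_nonempty)
  have hub: "reach ?F' z (last xs)" if "z \<in> W \<union> set xs" for z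
  proof (cases "z \<in> W")
    case True
    then have "reach F z (last xs)"
      using WF xs(3) by (simp add: connected_subgraph_def connected_graph_def)
    then show ?thesis by (rule reach_mono) simp
  next
    case False
    then have "reach (walk_edges xs) z (last xs)"
      using that walk_reach[OF walk_walk_edges[OF ne]] last_in_set[OF ne] by simp
    then show ?thesis by (rule reach_mono) simp
  qed
  then have "connected_graph (W \<union> set xs) ?F'"
    using xs(3) by (intro connected_graph_hub) auto
  moreover have "set xs \<subseteq> V" using walk_subset_vertices[OF sg xs(1,2)] .
  ultimately show ?thesis
    using WF walk_edges_subset[OF xs(1)]
    by (auto simp: connected_subgraph_def dest: walk_edges_subset_set)
qed

definition shortest_walk :: "'a set set \<Rightarrow> 'a set \<Rightarrow> 'a list \<Rightarrow> bool" where
  "shortest_walk D W xs \<longleftrightarrow> walk D xs \<and> last xs \<in> W \<and>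
     (\<forall>ys. walk D ys \<and> hd ys = hd xs \<and> last ys \<in> W \<longrightarrow> length xs \<le> length ys)"

lemma shortest_walk_exists:
  assumes "reach D v w" "w \<in> W"
  obtains xs where "shortest_walk D W xs" "hd xs = v"
proof -
  define P where "P xs \<longleftrightarrow> walk D xs \<and> hd xs = v \<and> last xs \<in> W" for xs
  obtain xs0 where "walk D xs0" "hd xs0 = v" "last xs0 = w"
    using assms(1) by (rule reach_distinct_walk)
  then have "P xs0" using assms(2) by (simp add: P_def)
  then obtain xs where "P xs" "\<And>ys. P ys \<Longrightarrow> length xs \<le> length ys"
    using ex_has_least_nat[of P xs0 length] by metis
  then show ?thesis using that by (auto simp: shortest_walk_def P_def)
qed

lemma shortest_walk_tl:
  assumes "shortest_walk D W (v # xs)" "xs \<noteq> []"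
  shows "shortest_walk D W xs"
  unfolding shortest_walk_def
proof (intro conjI allI impI)
  show "walk D xs" "last xs \<in> W" using assms by (auto simp: shortest_walk_def walk_Cons)
next
  fix ys assume ys: "walk D ys \<and> hd ys = hd xs \<and> last ys \<in> W"
  then have "walk D (v # ys)" "last (v # ys) \<in> W"
    using assms walk_nonempty[of D ys] by (auto simp: shortest_walk_def walk_Cons)
  then show "length xs \<le> length ys"
    using assms(1) unfolding shortest_walk_def by fastforce
qed

lemma shortest_walk_hd_notin:
  assumes "shortest_walk D W (v # x # xs)"
  shows "v \<notin> W"
proof
  assume "v \<in> W"
  then have "length (v # x # xs) \<le> length [v]"
    using assms unfolding shortest_walk_def by (metis last.simps list.sel(1) walk_singleton)
  then show False by simp
qed

section \<open>Subsets of a partitioned set\<close>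

lemma restrict_eq_PiE_iff:
  assumes "l \<in> C \<rightarrow>\<^sub>E A"
  shows "restrict f C = l \<longleftrightarrow> (\<forall>c\<in>C. f c = l c)"
proof
  assume "\<forall>c\<in>C. f c = l c"
  then show "restrict f C = l"
    using PiE_arb[OF assms] by (intro ext) (simp add: restrict_def)
qed auto

lemma card_eq_sum_card_Int_parts:
  assumes "partition_on V C" "finite V" "S \<subseteq> V"
  shows "card S = (\<Sum>c\<in>C. card (S \<inter> c))"
proof -
  have finC: "finite C" using assms(1,2) by (metis finite_UnionD partition_onD1)
  have "S = (\<Union>c\<in>C. S \<inter> c)" using partition_onD1[OF assms(1)] assms(3) by blast
  then have "card S = card (\<Union>c\<in>C. S \<inter> c)" by simp
  also have "\<dots> = (\<Sum>c\<in>C. card (S \<inter> c))"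
  proof (rule card_UN_disjoint[OF finC])
    show "\<forall>c\<in>C. finite (S \<inter> c)" using finite_subset[OF assms(3,2)] by blast
    show "\<forall>c\<in>C. \<forall>c'\<in>C. c \<noteq> c' \<longrightarrow> S \<inter> c \<inter> (S \<inter> c') = {}"
      using partition_onD2[OF assms(1)] by (auto simp: disjoint_def)
  qed
  finally show ?thesis .
qed

lemma card_subsets_Int_parts:
  assumes part: "partition_on V C" and "finite V"
  shows "card {S. S \<subseteq> V \<and> (\<forall>c\<in>C. card (S \<inter> c) = l c)} = (\<Prod>c\<in>C. card c choose l c)"
proof -
  let ?A = "{S. S \<subseteq> V \<and> (\<forall>c\<in>C. card (S \<inter> c) = l c)}"
  let ?T = "\<Pi>\<^sub>E c\<in>C. {T. T \<subseteq> c \<and> card T = l c}"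
  have finC: "finite C" using assms by (metis finite_UnionD partition_onD1)
  have parts: "c \<subseteq> V" if "c \<in> C" for c using partition_onD1[OF part] that by blast
  have disj: "c \<inter> c' = {}" if "c \<in> C" "c' \<in> C" "c \<noteq> c'" for c c'
    using partition_onD2[OF part] that by (auto simp: disjoint_def)
  have Int_Union: "(\<Union>c'\<in>C. P c') \<inter> c = P c" if "P \<in> ?T" "c \<in> C" for P c
    using that disj PiE_mem[OF that(1)] by blast
  have "bij_betw (\<lambda>S. restrict (\<lambda>c. S \<inter> c) C) ?A ?T"
  proof (rule bij_betw_byWitness[where f' = "\<lambda>P. \<Union>c\<in>C. P c"])
    show "\<forall>S\<in>?A. (\<Union>c\<in>C. restrict (\<lambda>c. S \<inter> c) C c) = S"
      using partition_onD1[OF part] by auto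
    show "\<forall>P\<in>?T. restrict (\<lambda>c. (\<Union>c'\<in>C. P c') \<inter> c) C = P"
    proof (intro ballI ext)
      fix P c assume P: "P \<in> ?T"
      show "restrict (\<lambda>c. (\<Union>c'\<in>C. P c') \<inter> c) C c = P c"
        using Int_Union[OF P] PiE_arb[OF P] by (cases "c \<in> C") auto
    qed
    show "(\<lambda>S. restrict (\<lambda>c. S \<inter> c) C) ` ?A \<subseteq> ?T"
      by (auto simp: restrict_PiE_iff)
    show "(\<lambda>P. \<Union>c\<in>C. P c) ` ?T \<subseteq> ?A"
    proof (intro image_subsetI CollectI conjI ballI)
      fix P c assume P: "P \<in> ?T"
      show "(\<Union>c\<in>C. P c) \<subseteq> V" using PiE_mem[OF P] parts by blast
      assume "c \<in> C"
      then show "card ((\<Union>c\<in>C. P c) \<inter> c) = l c" using Int_Union[OF P] PiE_mem[OF P] by simp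
    qed
  qed
  then have "card ?A = card ?T" by (rule bij_betw_same_card)
  also have "\<dots> = (\<Prod>c\<in>C. card {T. T \<subseteq> c \<and> card T = l c})" by (rule card_PiE[OF finC])
  also have "\<dots> = (\<Prod>c\<in>C. card c choose l c)"
    using parts assms(2) by (intro prod.cong refl n_subsets) (auto intro: finite_subset)
  finally show ?thesis .
qed

lemma sum_subsets_by_Int_profile:
  fixes g :: "('a set \<Rightarrow> nat) \<Rightarrow> 'b::comm_semiring_1"
  assumes part: "partition_on V C" and finV: "finite V"
  shows "(\<Sum>S | S \<subseteq> V \<and> card S = k. g (restrict (\<lambda>c. card (S \<inter> c)) C)) =
         (\<Sum>l | l \<in> C \<rightarrow>\<^sub>E {0..k} \<and> sum l C = k. of_nat (\<Prod>c\<in>C. card c choose l c) * g l)"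
proof -
  let ?Sk = "{S. S \<subseteq> V \<and> card S = k}" and ?L = "{l. l \<in> C \<rightarrow>\<^sub>E {0..k} \<and> sum l C = k}"
  define \<delta> where "\<delta> S = restrict (\<lambda>c. card (S \<inter> c)) C" for S
  have finC: "finite C" using assms by (metis finite_UnionD partition_onD1)
  have "?Sk \<subseteq> Pow V" by blast
  then have finSk: "finite ?Sk" using finV by (simp add: finite_subset)
  have "?L \<subseteq> C \<rightarrow>\<^sub>E {0..k}" by blast
  then have finL: "finite ?L" using finC by (simp add: finite_subset finite_PiE)
  have sum_\<delta>: "sum (\<delta> S) C = card S" if "S \<subseteq> V" for S
    using card_eq_sum_card_Int_parts[OF part finV that] by (simp add: \<delta>_def)
  have "\<delta> S \<in> ?L" if "S \<in> ?Sk" for S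
  proof -
    have "card (S \<inter> c) \<le> k" for c
      using that finite_subset[OF _ finV] by (auto intro: card_mono)
    then show ?thesis using that sum_\<delta> by (auto simp: \<delta>_def)
  qed
  then have maps: "\<delta> ` ?Sk \<subseteq> ?L" by blast
  have fiber: "{S \<in> ?Sk. \<delta> S = l} = {S. S \<subseteq> V \<and> (\<forall>c\<in>C. card (S \<inter> c) = l c)}"
    if "l \<in> ?L" for l
  proof -
    have "\<delta> S = l \<longleftrightarrow> (\<forall>c\<in>C. card (S \<inter> c) = l c)" for S
      using restrict_eq_PiE_iff[of l C "{0..k}" "\<lambda>c. card (S \<inter> c)"] that by (simp add: \<delta>_def)
    moreover have "card S = k" if "S \<subseteq> V" "\<forall>c\<in>C. card (S \<inter> c) = l c" for S
    proof -
      have "card S = (\<Sum>c\<in>C. card (S \<inter> c))" by (rule card_eq_sum_card_Int_parts[OF part finV that(1)])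
      also have "\<dots> = sum l C" using that(2) by (intro sum.cong) auto
      finally show ?thesis using \<open>l \<in> ?L\<close> by simp
    qed
    ultimately show ?thesis by blast
  qed
  have "(\<Sum>S\<in>?Sk. g (\<delta> S)) = (\<Sum>l\<in>?L. \<Sum>S | S \<in> ?Sk \<and> \<delta> S = l. g (\<delta> S))"
    by (rule sum.group[OF finSk finL maps, symmetric])
  also have "\<dots> = (\<Sum>l\<in>?L. of_nat (\<Prod>c\<in>C. card c choose l c) * g l)"
  proof (rule sum.cong[OF refl])
    fix l assume l: "l \<in> ?L"
    have "(\<Sum>S | S \<in> ?Sk \<and> \<delta> S = l. g (\<delta> S)) = of_nat (card {S \<in> ?Sk. \<delta> S = l}) * g l"
      by simp
    also have "card {S \<in> ?Sk. \<delta> S = l} = (\<Prod>c\<in>C. card c choose l c)"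
      unfolding fiber[OF l] by (rule card_subsets_Int_parts[OF part finV])
    finally show "(\<Sum>S | S \<in> ?Sk \<and> \<delta> S = l. g (\<delta> S)) = of_nat (\<Prod>c\<in>C. card c choose l c) * g l" .
  qed
  finally show ?thesis by (simp add: \<delta>_def)
qed

lemma card_support_eq_1:
  fixes l :: "'a \<Rightarrow> nat"
  assumes "finite C" "sum l C = k" "k \<ge> 1" "card C \<le> 1 \<or> (\<exists>c\<in>C. k \<le> l c)"
  shows "card {c\<in>C. l c \<noteq> 0} = 1"
proof -
  have fin: "finite {c\<in>C. l c \<noteq> 0}" using assms(1) by simp
  have "{c\<in>C. l c \<noteq> 0} \<noteq> {}"
  proof
    assume "{c\<in>C. l c \<noteq> 0} = {}"
    then have "sum l C = 0" by (intro sum.neutral) blast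
    then show False using assms(2,3) by simp
  qed
  moreover have "card {c\<in>C. l c \<noteq> 0} \<le> 1"
    using assms(4)
  proof
    assume "card C \<le> 1"
    then show ?thesis using card_mono[OF assms(1), of "{c\<in>C. l c \<noteq> 0}"] by simp
  next
    assume "\<exists>c\<in>C. k \<le> l c"
    then obtain c0 where c0: "c0 \<in> C" "k \<le> l c0" by blast
    then have "sum l (C - {c0}) = 0" using assms(2) sum.remove[OF assms(1) c0(1), of l] by linarith
    then have zero: "\<forall>c\<in>C - {c0}. l c = 0" using assms(1) by simp
    have "{c\<in>C. l c \<noteq> 0} \<subseteq> {c0}"
    proof
      fix c assume "c \<in> {c\<in>C. l c \<noteq> 0}"
      then show "c \<in> {c0}" using zero by (cases "c = c0") auto
    qed
    then show ?thesis using card_mono[of "{c0}"] by fastforce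
  qed
  ultimately show ?thesis using fin by (simp add: le_antisym Suc_leI card_gt_0_iff)
qed

lemma sum_card_parts_met:
  assumes part: "partition_on V C" and finV: "finite V" and k: "k \<ge> 1"
  shows "(\<Sum>S | S \<subseteq> V \<and> card S = k. int (card {c\<in>C. c \<inter> S \<noteq> {}}) - 1) =
    (if card C \<le> 1 then 0 else
      \<Sum>l | l \<in> C \<rightarrow>\<^sub>E {0..k} \<and> sum l C = k \<and> (\<forall>c\<in>C. l c < k).
        int (\<Prod>c\<in>C. card c choose l c) * (int (card {c\<in>C. l c \<noteq> 0}) - 1))"
proof -
  define G where "G l = int (card {c\<in>C. l c \<noteq> 0}) - 1" for l :: "'a set \<Rightarrow> nat"
  define T where "T l = int (\<Prod>c\<in>C. card c choose l c) * G l" for l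
  let ?L0 = "{l. l \<in> C \<rightarrow>\<^sub>E {0..k} \<and> sum l C = k}"
  have finC: "finite C" using assms by (metis finite_UnionD partition_onD1)
  have "int (card {c\<in>C. c \<inter> S \<noteq> {}}) - 1 = G (restrict (\<lambda>c. card (S \<inter> c)) C)"
    if "S \<subseteq> V" for S
  proof -
    have "finite S" using that finV by (rule finite_subset)
    then have "{c\<in>C. c \<inter> S \<noteq> {}} = {c\<in>C. restrict (\<lambda>c. card (S \<inter> c)) C c \<noteq> 0}"
      by (auto simp: card_gt_0_iff)
    then show ?thesis by (simp add: G_def)
  qed
  then have eq: "(\<Sum>S | S \<subseteq> V \<and> card S = k. int (card {c\<in>C. c \<inter> S \<noteq> {}}) - 1) =
      (\<Sum>l\<in>?L0. T l)"
    using sum_subsets_by_Int_profile[OF part finV, where g = G and k = k] by (simp add: T_def)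
  have T0: "T l = 0" if "l \<in> ?L0" "card C \<le> 1 \<or> (\<exists>c\<in>C. k \<le> l c)" for l
    using card_support_eq_1[OF finC _ k] that by (simp add: T_def G_def)
  show ?thesis
  proof (cases "card C \<le> 1")
    case True
    then have "(\<Sum>l\<in>?L0. T l) = 0" using T0 by (intro sum.neutral) blast
    then show ?thesis using eq True by simp
  next
    case False
    have "?L0 \<subseteq> C \<rightarrow>\<^sub>E {0..k}" by blast
    then have "finite ?L0" using finC by (simp add: finite_subset finite_PiE)
    then have "(\<Sum>l\<in>?L0. T l) =
        (\<Sum>l | l \<in> C \<rightarrow>\<^sub>E {0..k} \<and> sum l C = k \<and> (\<forall>c\<in>C. l c < k). T l)"
      using T0 by (intro sum.mono_neutral_right) (auto simp: not_less)
    then show ?thesis using eq False by (simp add: T_def G_def)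
  qed
qed

section \<open>Steiner distances in block graphs\<close>

locale connected_block_graph =
  fixes V :: "'a set" and E :: "'a set set"
  assumes simple: "simple_graph V E" and connected: "connected_graph V E" and clique: "block_graph V E"
begin

lemma finite_V: "finite V"
  using simple by (simp add: simple_graph_def)

lemma finite_E: "finite E"
proof -
  have "E \<subseteq> Pow V" using simple by (auto simp: simple_graph_def)
  then show ?thesis using finite_V by (simp add: finite_subset)
qed

lemma finite_blocks: "finite (blocks V E)"
proof -
  have "blocks V E \<subseteq> Pow V" by (auto simp: blocks_def is_block_def)
  then show ?thesis using finite_V by (simp add: finite_subset)
qed

lemma edge_in_some_block:
  assumes "{u, v} \<in> E"
  obtains B where "B \<in> blocks V E" "u \<in> B" "v \<in> B"
  using simple_graph_edgeD[OF simple assms] edge_in_block[OF finite_V _ _ _ assms]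
  by (metis blocks_def mem_Collect_eq)

lemma block_edge_unique:
  assumes "B \<in> blocks V E" "B' \<in> blocks V E" "e \<in> induced_edges E B" "e \<in> induced_edges E B'"
  shows "B = B'"
proof -
  have "e \<in> E" using assms(3) by (simp add: induced_edges_def)
  then obtain u v where "e = {u, v}" "u \<noteq> v" by (rule simple_graph_edgeE[OF simple])
  then show ?thesis
    using assms block_unique[of V E B B' u v] by (auto simp: blocks_def induced_edges_def)
qed

lemma card_eq_sum_blocks:
  assumes "F \<subseteq> E"
  shows "card F = (\<Sum>B\<in>blocks V E. card (F \<inter> induced_edges E B))"
proof -
  have "F = (\<Union>B\<in>blocks V E. F \<inter> induced_edges E B)"
  proof (intro equalityI subsetI)
    fix e assume "e \<in> F"
    then have "e \<in> E" using assms by blast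
    then obtain u v where "e = {u, v}" by (rule simple_graph_edgeE[OF simple])
    with \<open>e \<in> E\<close> have uv: "e = {u, v}" "{u, v} \<in> E" by simp_all
    obtain B where "B \<in> blocks V E" "u \<in> B" "v \<in> B" using uv(2) by (rule edge_in_some_block)
    then show "e \<in> (\<Union>B\<in>blocks V E. F \<inter> induced_edges E B)"
      using \<open>e \<in> F\<close> uv by (auto simp: induced_edges_def)
  qed auto
  moreover have "finite F" using assms finite_E by (rule finite_subset)
  then have "card (\<Union>B\<in>blocks V E. F \<inter> induced_edges E B) =
      (\<Sum>B\<in>blocks V E. card (F \<inter> induced_edges E B))"
  proof (intro card_UN_disjoint[OF finite_blocks] ballI impI)
    fix B B' assume "B \<in> blocks V E" "B' \<in> blocks V E" "B \<noteq> B'"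
    then show "F \<inter> induced_edges E B \<inter> (F \<inter> induced_edges E B') = {}"
      using block_edge_unique[of B B'] by blast
  qed simp
  ultimately show ?thesis by simp
qed

definition comp :: "'a set \<Rightarrow> 'a \<Rightarrow> 'a set" where
  "comp B = component_of V (delete_block_edges E B)"

lemma comp_eq_iff: "x \<in> V \<Longrightarrow> y \<in> V \<Longrightarrow> comp B x = comp B y \<longleftrightarrow> reach (delete_block_edges E B) x y"
  unfolding comp_def by (rule component_of_eq_iff)

definition excess :: "'a set \<Rightarrow> nat" where
  "excess S = (\<Sum>B\<in>blocks V E. card (comp B ` S) - 1)"

text \<open>Contracting the components of \<open>G \ B\<close> maps a connected subgraph onto a connected graph
  whose edges all come from \<open>B\<close>.\<close>
lemma card_comp_image_le:
  assumes "connected_subgraph V E W F"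
  shows "card (comp B ` W) \<le> card (F \<inter> induced_edges E B) + 1"
proof -
  let ?Q = "comp B ` W" and ?D = "(\<lambda>e. comp B ` e) ` (F \<inter> induced_edges E B)"
  have W: "W \<subseteq> V" "F \<subseteq> E" "\<forall>e\<in>F. e \<subseteq> W" "connected_graph W F"
    using assms by (auto simp: connected_subgraph_def)
  have finF: "finite F" using W(2) finite_E by (rule finite_subset)
  have "reach ?D (comp B x) (comp B y)" if "x \<in> W" "y \<in> W" for x y
  proof (rule reach_map[where F = F])
    show "reach F x y" using W(4) that by (simp add: connected_graph_def)
  next
    fix p q assume pq: "{p, q} \<in> F"
    show "comp B p = comp B q \<or> {comp B p, comp B q} \<in> ?D"
    proof (cases "{p, q} \<in> induced_edges E B")
      case True
      then have "comp B ` {p, q} \<in> ?D" using pq by blast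
      then show ?thesis by simp
    next
      case False
      then have "reach (delete_block_edges E B) p q"
        using pq W(2) by (intro reach_edge) (auto simp: delete_block_edges_def)
      moreover have "p \<in> V" "q \<in> V" using pq W(1,3) by blast+
      ultimately show ?thesis using comp_eq_iff[of p q B] by simp
    qed
  qed
  then have "connected_graph ?Q ?D"
    using W(4) by (auto simp: connected_graph_def)
  then have "components ?Q ?D = {?Q}" by (rule components_connected)
  moreover have "card ?Q \<le> card ?D + card (components ?Q ?D)"
  proof (rule card_le_card_edges_components)
    show "finite ?Q" using W(1) finite_V by (auto intro: finite_subset)
    show "finite ?D" using finF by simp
    show "\<forall>d\<in>?D. \<exists>a b. a \<in> ?Q \<and> b \<in> ?Q \<and> d = {a, b}"
    proof
      fix d assume "d \<in> ?D"
      then obtain e where e: "e \<in> F" "d = comp B ` e" by blast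
      moreover obtain p q where "e = {p, q}" using simple_graph_edgeE[OF simple] e(1) W(2) by blast
      moreover have "p \<in> W" "q \<in> W" using W(3) e(1) calculation by auto
      ultimately show "\<exists>a b. a \<in> ?Q \<and> b \<in> ?Q \<and> d = {a, b}" by blast
    qed
  qed
  moreover have "card ?D \<le> card (F \<inter> induced_edges E B)" using finF by (simp add: card_image_le)
  ultimately show ?thesis by simp
qed

lemma excess_le_card:
  assumes "S \<subseteq> W" "connected_subgraph V E W F"
  shows "excess S \<le> card F"
proof -
  have "card (comp B ` S) - 1 \<le> card (F \<inter> induced_edges E B)" for B
  proof -
    have "finite W" using assms(2) finite_V by (auto simp: connected_subgraph_def intro: finite_subset)
    then have "card (comp B ` S) \<le> card (comp B ` W)"
      using assms(1) by (intro card_mono) auto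
    then show ?thesis using card_comp_image_le[OF assms(2), of B] by simp
  qed
  then have "excess S \<le> (\<Sum>B\<in>blocks V E. card (F \<inter> induced_edges E B))"
    unfolding excess_def by (rule sum_mono)
  also have "\<dots> = card F"
    using assms(2) by (simp add: card_eq_sum_blocks connected_subgraph_def)
  finally show ?thesis .
qed

definition missed_blocks :: "'a set \<Rightarrow> 'a \<Rightarrow> 'a set set" where
  "missed_blocks W v = {B\<in>blocks V E. comp B v \<notin> comp B ` W}"

lemma excess_insert:
  assumes "finite S" "S \<noteq> {}"
  shows "excess (insert v S) = excess S + card (missed_blocks S v)"
proof -
  have "card (comp B ` insert v S) - 1 =
        card (comp B ` S) - 1 + (if comp B v \<notin> comp B ` S then 1 else 0)" for B
    using assms by (simp add: card_insert_if card_gt_0_iff Suc_diff_le)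
  then have "excess (insert v S) =
      excess S + (\<Sum>B\<in>blocks V E. if comp B v \<notin> comp B ` S then 1 else 0)"
    by (simp add: excess_def sum.distrib)
  also have "(\<Sum>B\<in>blocks V E. if comp B v \<notin> comp B ` S then 1 else 0) = card (missed_blocks S v)"
    using finite_blocks by (simp add: sum.If_cases missed_blocks_def Int_def)
  finally show ?thesis .
qed

text \<open>The subgraph has to leave the component of \<open>a\<close> in \<open>G \ B\<close>, which does not contain \<open>b\<close>;
  it can only do so along an edge of \<open>B\<close>, and the only vertex of \<open>B\<close> in that component
  is \<open>a\<close>.\<close>
lemma block_vertex_in_subgraph:
  assumes WF: "connected_subgraph V E W F" and B: "B \<in> blocks V E"
    and ab: "a \<in> B" "b \<in> B" "a \<noteq> b"
    and met: "comp B a \<in> comp B ` W" "comp B b \<in> comp B ` W"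
  shows "a \<in> W"
proof -
  let ?D = "delete_block_edges E B"
  have blk: "is_block V E B" using B by (simp add: blocks_def)
  have W: "W \<subseteq> V" "F \<subseteq> E" "\<forall>e\<in>F. e \<subseteq> W" "connected_graph W F"
    using WF by (auto simp: connected_subgraph_def)
  have "a \<in> V" "b \<in> V" using blk ab by (auto simp: is_block_def)
  obtain w1 w2 where w: "w1 \<in> W" "w2 \<in> W" "comp B a = comp B w1" "comp B b = comp B w2"
    using met by blast
  then have reach_w: "reach ?D a w1" "reach ?D b w2"
    using comp_eq_iff[of a w1 B] comp_eq_iff[of b w2 B] \<open>a \<in> V\<close> \<open>b \<in> V\<close> W(1) by auto
  have "\<not> reach ?D a w2"
  proof
    assume "reach ?D a w2"
    then have "reach ?D a b" by (rule reach_trans[OF _ reach_sym[OF reach_w(2)]])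
    then show False using block_vertices_separated[OF simple blk ab] by simp
  qed
  moreover have "reach F w1 w2" using W(4) w(1,2) by (simp add: connected_graph_def)
  ultimately obtain p q where pq: "{p, q} \<in> F" "reach ?D a p" "\<not> reach ?D a q"
    using reach_crossing_edge[of F w1 w2 "reach ?D a"] reach_w(1) by blast
  then have "{p, q} \<in> induced_edges E B"
    using W(2) reach_trans[OF pq(2) reach_edge[of p q ?D]] by (auto simp: delete_block_edges_def)
  then have "p = a"
    using block_vertices_separated[OF simple blk ab(1), of p] pq(2) by (auto simp: induced_edges_def)
  then show "a \<in> W" using pq(1) W(3) by auto
qed

text \<open>Otherwise, as the block is a clique, the walk could jump from its start directly to its
  last vertex in the block.\<close>
lemma shortest_walk_avoids_block:
  assumes xs: "shortest_walk E W (v # x # xs)" and B: "B \<in> blocks V E" "v \<in> B" "x \<in> B"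
  shows "walk (delete_block_edges E B) (x # xs)"
proof -
  obtain as u bs where split: "x # xs = as @ u # bs" "u \<in> B" "\<forall>z\<in>set bs. z \<notin> B"
    using split_list_last_prop[of "x # xs" "\<lambda>z. z \<in> B"] B(3) by auto
  have "walk E ((v # as) @ (u # bs))" and last_ubs: "last (u # bs) \<in> W"
    using xs split(1) by (auto simp: shortest_walk_def)
  then have walk_ubs: "walk E (u # bs)" using walk_append[THEN iffD1] by blast
  define ys where "ys = (if u = v then u # bs else v # u # bs)"
  have "{v, u} \<in> E" if "u \<noteq> v"
    using clique B(1,2) split(2) that by (auto simp: block_graph_def)
  then have "walk E ys" "hd ys = v" "last ys \<in> W"
    using walk_ubs last_ubs by (auto simp: ys_def walk_Cons)
  then have "length (v # x # xs) \<le> length ys"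
    using xs by (auto simp: shortest_walk_def)
  then have "as = []" using split(1) by (auto simp: ys_def split: if_splits)
  then have "x # xs = u # bs" using split(1) by simp
  moreover have "{p, q} \<in> delete_block_edges E B"
    if "p \<in> set (u # bs)" "q \<in> set (u # bs)" "{p, q} \<in> E" for p q
    using that split(3) simple_graph_edgeD[OF simple \<open>{p, q} \<in> E\<close>]
    by (auto simp: induced_edges_def delete_block_edges_def)
  ultimately show ?thesis using walk_ubs walk_mono by metis
qed

lemma missed_blocks_shortest_walk_step:
  assumes WF: "connected_subgraph V E W F" and sw: "shortest_walk E W (v # x # xs)"
  shows "missed_blocks W x \<subset> missed_blocks W v"
proof -
  have "{v, x} \<in> E" using sw by (simp add: shortest_walk_def walk_Cons)
  then obtain B0 where B0: "B0 \<in> blocks V E" "v \<in> B0" "x \<in> B0"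
    by (rule edge_in_some_block)
  have vx: "v \<in> V" "x \<in> V" "v \<noteq> x" using simple_graph_edgeD[OF simple \<open>{v, x} \<in> E\<close>] by auto
  have "walk (delete_block_edges E B0) (x # xs)"
    by (rule shortest_walk_avoids_block[OF sw B0])
  then have "reach (delete_block_edges E B0) x (last (x # xs))"
    using walk_reach by (metis last_in_set list.distinct(1) list.set_intros(1))
  moreover have "last (x # xs) \<in> W" "W \<subseteq> V"
    using sw WF by (auto simp: shortest_walk_def connected_subgraph_def)
  ultimately have met_x: "comp B0 x \<in> comp B0 ` W"
    using vx comp_eq_iff by (metis image_eqI subsetD)
  have "v \<notin> W" by (rule shortest_walk_hd_notin[OF sw])
  then have "B0 \<in> missed_blocks W v"
    using block_vertex_in_subgraph[OF WF B0 vx(3) _ met_x] B0(1)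
    by (auto simp: missed_blocks_def)
  moreover have "B \<in> missed_blocks W v" if "B \<in> missed_blocks W x" for B
  proof -
    have "B \<noteq> B0" using that met_x by (auto simp: missed_blocks_def)
    then have "{v, x} \<notin> induced_edges E B"
      using block_edge_unique[of B B0 "{v, x}"] B0 that \<open>{v, x} \<in> E\<close>
      by (auto simp: missed_blocks_def induced_edges_def)
    then have "reach (delete_block_edges E B) v x"
      using \<open>{v, x} \<in> E\<close> by (intro reach_edge) (simp add: delete_block_edges_def)
    then have "comp B v = comp B x" using vx comp_eq_iff by simp
    then show ?thesis using that by (simp add: missed_blocks_def)
  qed
  moreover have "B0 \<notin> missed_blocks W x" using met_x by (simp add: missed_blocks_def)
  ultimately show ?thesis by blast
qed

lemma shortest_walk_length:
  assumes "connected_subgraph V E W F" "shortest_walk E W xs"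
  shows "length xs \<le> Suc (card (missed_blocks W (hd xs)))"
  using assms(2)
proof (induction xs)
  case (Cons v xs)
  show ?case
  proof (cases xs)
    case (Cons x xs')
    have "finite (missed_blocks W v)" using finite_blocks by (simp add: missed_blocks_def)
    then have "card (missed_blocks W x) < card (missed_blocks W v)"
      using missed_blocks_shortest_walk_step[OF assms(1)] Cons.prems Cons
      by (simp add: psubset_card_mono)
    moreover have "length xs \<le> Suc (card (missed_blocks W x))"
      using Cons.IH shortest_walk_tl[OF Cons.prems] Cons by simp
    ultimately show ?thesis using Cons by simp
  qed simp
qed (simp add: shortest_walk_def)

lemma steiner_tree_exists:
  assumes "finite S" "S \<noteq> {}" "S \<subseteq> V"
  shows "\<exists>W F. S \<subseteq> W \<and> connected_subgraph V E W F \<and> card F \<le> excess S"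
  using assms
proof (induction S rule: finite_ne_induct)
  case (singleton s)
  have "connected_subgraph V E {s} {}"
    using singleton by (simp add: connected_subgraph_def connected_graph_def)
  then show ?case by (intro exI[of _ "{s}"] exI[of _ "{}"]) (simp add: excess_def)
next
  case (insert v S)
  then obtain W F where WF: "S \<subseteq> W" "connected_subgraph V E W F" "card F \<le> excess S"
    by auto
  obtain w where "w \<in> W" using WF(1) insert.hyps(2) by blast
  moreover have "v \<in> V" "W \<subseteq> V" using insert.prems WF(2) by (auto simp: connected_subgraph_def)
  ultimately have "reach E v w" using connected by (auto simp: connected_graph_def)
  then obtain xs where xs: "shortest_walk E W xs" "hd xs = v"
    using \<open>w \<in> W\<close> by (rule shortest_walk_exists)
  have "connected_subgraph V E (W \<union> set xs) (F \<union> walk_edges xs)"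
    using xs \<open>v \<in> V\<close> by (intro connected_subgraph_Un_walk[OF simple WF(2)]) (auto simp: shortest_walk_def)
  moreover have "insert v S \<subseteq> W \<union> set xs"
    using WF(1) xs(2) hd_in_set[OF walk_nonempty[of E xs]] xs(1)
    by (auto simp: shortest_walk_def)
  moreover have "card (F \<union> walk_edges xs) \<le> excess (insert v S)"
  proof -
    have "missed_blocks W v \<subseteq> missed_blocks S v"
      using WF(1) by (auto simp: missed_blocks_def)
    then have "card (missed_blocks W v) \<le> card (missed_blocks S v)"
      using finite_blocks by (intro card_mono) (auto simp: missed_blocks_def)
    moreover have "length xs \<le> Suc (card (missed_blocks W v))"
      using shortest_walk_length[OF WF(2) xs(1)] xs(2) by simp
    ultimately show ?thesis
      using card_Un_le[of F "walk_edges xs"] card_walk_edges[of xs] WF(3)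
        excess_insert[OF insert.hyps(1,2), of v]
      by linarith
  qed
  ultimately show ?case by blast
qed

lemma steiner_dist_eq_excess:
  assumes "finite S" "S \<noteq> {}" "S \<subseteq> V"
  shows "steiner_dist V E S = excess S"
  unfolding steiner_dist_def'
proof (rule Least_equality)
  obtain W F where WF: "S \<subseteq> W" "connected_subgraph V E W F" "card F \<le> excess S"
    using steiner_tree_exists[OF assms] by blast
  moreover have "excess S \<le> card F" using excess_le_card[OF WF(1,2)] .
  ultimately show "\<exists>W F. S \<subseteq> W \<and> connected_subgraph V E W F \<and> card F = excess S"
    by (intro exI[of _ W] exI[of _ F]) simp
next
  fix m assume "\<exists>W F. S \<subseteq> W \<and> connected_subgraph V E W F \<and> card F = m"
  then show "excess S \<le> m" using excess_le_card by blast
qed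

lemma steiner_dist_eq_sum_blocks:
  assumes "S \<subseteq> V" "S \<noteq> {}"
  shows "int (steiner_dist V E S) = (\<Sum>B\<in>blocks V E. int (card (comp B ` S)) - 1)"
proof -
  have "finite S" using assms(1) finite_V by (rule finite_subset)
  then have "card (comp B ` S) \<ge> 1" for B using assms(2) by (simp add: Suc_le_eq card_gt_0_iff)
  then show ?thesis
    using steiner_dist_eq_excess[OF \<open>finite S\<close> assms(2,1)] by (simp add: excess_def of_nat_diff)
qed

lemma comp_image_eq:
  assumes "S \<subseteq> V"
  shows "comp B ` S = {c \<in> components V (delete_block_edges E B). c \<inter> S \<noteq> {}}"
proof (intro equalityI subsetI)
  fix c assume "c \<in> comp B ` S"
  then obtain s where "s \<in> S" "c = comp B s" by blast
  then show "c \<in> {c \<in> components V (delete_block_edges E B). c \<inter> S \<noteq> {}}"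
    using assms by (auto simp: comp_def components_eq_image component_of_def)
next
  fix c assume "c \<in> {c \<in> components V (delete_block_edges E B). c \<inter> S \<noteq> {}}"
  then obtain x s where "x \<in> V" "c = comp B x" "s \<in> S" "s \<in> c"
    by (auto simp: components_eq_image comp_def)
  moreover have "s \<in> V" using \<open>s \<in> S\<close> assms by blast
  ultimately have "c = comp B s"
    using comp_eq_iff[of x s B] by (simp add: comp_def component_of_def)
  then show "c \<in> comp B ` S" using \<open>s \<in> S\<close> by blast
qed

lemma sum_card_comp_image:
  assumes "k \<ge> 1"
  shows "(\<Sum>S | S \<subseteq> V \<and> card S = k. int (card (comp B ` S)) - 1) =
    N'_k k V (delete_block_edges E B)"
proof -
  have "(\<Sum>S | S \<subseteq> V \<and> card S = k. int (card (comp B ` S)) - 1) =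
      (\<Sum>S | S \<subseteq> V \<and> card S = k.
        int (card {c \<in> components V (delete_block_edges E B). c \<inter> S \<noteq> {}}) - 1)"
    by (intro sum.cong refl) (simp add: comp_image_eq)
  then show ?thesis
    unfolding N'_k_def Let_def
    using sum_card_parts_met[OF partition_on_components finite_V assms] by simp
qed

end

theorem theorem1:
  fixes V :: "'a set" and E :: "'a set set" and k :: nat
  assumes "simple_graph V E"
    and "connected_graph V E"
    and "block_graph V E"
    and "k \<ge> 2"
  shows "int (steiner_wiener k V E) =
         (\<Sum>B\<in>blocks V E. N'_k k V (delete_block_edges E B))"
proof -
  interpret connected_block_graph V E using assms(1-3) by unfold_locales
  have "int (steiner_wiener k V E) =
      (\<Sum>S | S \<subseteq> V \<and> card S = k. \<Sum>B\<in>blocks V E. int (card (comp B ` S)) - 1)"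
    unfolding steiner_wiener_def of_nat_sum
    using assms(4) by (intro sum.cong refl steiner_dist_eq_sum_blocks) auto
  also have "\<dots> = (\<Sum>B\<in>blocks V E. \<Sum>S | S \<subseteq> V \<and> card S = k. int (card (comp B ` S)) - 1)"
    by (rule sum.swap)
  also have "\<dots> = (\<Sum>B\<in>blocks V E. N'_k k V (delete_block_edges E B))"
    using assms(4) by (simp add: sum_card_comp_image)
  finally show ?thesis .
qed

end
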